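(* Let $X_1,\dots,X_m\subseteq\mathbb{R}^d$ be a family of nonempty finite sets in general position and let $n\ge1$ be an integer. Then there exists $\delta>0$ such that the following holds: if $X_1^{(n)}$ is obtained from $X_1$ by replacing each point $x\in X_1$ by a set (cloud) of $n$ points each within distance $\delta$ of $x$, in such a way that the family $X_1^{(n)},X_2,\dots,X_m$ is in general position, then \[ c(X_1,\dots,X_m)=c(X_1^{(n)},X_2,\dots,X_m). \]
   Context: A family of finite sets $X_1,\dots,X_m\subseteq\mathbb{R}^d$ is in general position if the sets are pairwise disjoint and their union is a set of points in general position. Sets $Y_1,\dots,Y_{d+1}\subseteq\mathbb{R}^d$ have the same-type property if for every choice $y_1\in Y_1,\dots,y_{d+1}\in Y_{d+1}$ the orientation of $(y_1,\dots,y_{d+1})$ is the same; sets $Y_1,\dots,Y_m$ have the same-type property if every $d+1$ of them do. For a family $X_1,\dots,X_m$ of nonempty finite sets in general position, $c(X_1,\dots,X_m)$ is the largest $c$ such that there exist $Y_i\subseteq X_i$ with the same-type property and $|Y_i|\ge c|X_i|$ for all $i$. *)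

theory Defs
  imports "HOL-Analysis.Analysis"
begin

definition points_gen_pos :: "(real^'d) set \<Rightarrow> bool" where
  "points_gen_pos P \<longleftrightarrow>
     (\<forall>S. S \<subseteq> P \<and> card S \<le> CARD('d) + 1 \<longrightarrow> \<not> affine_dependent S)"

definition family_gen_pos :: "(nat \<Rightarrow> (real^'d) set) \<Rightarrow> nat \<Rightarrow> bool" where
  "family_gen_pos X m \<longleftrightarrow>
     (\<forall>i<m. \<forall>j<m. i \<noteq> j \<longrightarrow> X i \<inter> X j = {}) \<and> points_gen_pos (\<Union>i<m. X i)"

text \<open>Orientation of a (d+1)-tuple of points indexed by 'd option (None being the
  last point): sign of det of the matrix with rows y_i - y_{d+1}, equivalently
  of the (d+1)x(d+1) matrix with rows (y_i, 1).\<close>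
definition orientation :: "('d option \<Rightarrow> real^'d) \<Rightarrow> real" where
  "orientation y = sgn (det (\<chi> i j. y (Some i) $ j - y None $ j))"

definition same_type :: "(nat \<Rightarrow> (real^'d) set) \<Rightarrow> nat \<Rightarrow> bool" where
  "same_type Y m \<longleftrightarrow>
     (\<forall>g :: 'd option \<Rightarrow> nat. inj g \<and> range g \<subseteq> {..<m} \<longrightarrow>
        (\<forall>y y'. (\<forall>k. y k \<in> Y (g k)) \<and> (\<forall>k. y' k \<in> Y (g k)) \<longrightarrow>
            orientation y = orientation y'))"

definition same_type_const :: "(nat \<Rightarrow> (real^'d) set) \<Rightarrow> nat \<Rightarrow> real" where
  "same_type_const X m = (GREATEST c. \<exists>Y. (\<forall>i<m. Y i \<subseteq> X i \<and> real (card (Y i)) \<ge> c * real (card (X i)))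
                                   \<and> same_type Y m)"

end

theory Submission imports Defs begin

text \<open>
  Orientations of affinely independent (d+1)-tuples are locally constant, so for small
  \<open>\<delta> > 0\<close> moving one point of a transversal of \<open>X\<^sub>1, \<dots>, X\<^sub>m\<close> by less than \<open>\<delta>\<close> keeps
  its orientation; if moreover \<open>2\<delta>\<close> is below all distances within \<open>X\<^sub>1\<close> (\<open>X 0\<close> here),
  the clouds are disjoint. A transversal meets \<open>X\<^sub>1\<close> at most once, so a same-type family
  \<open>Y\<close> for the old sets yields one for the new sets by replacing \<open>Y\<^sub>1\<close> with the union of
  its clouds, and conversely a same-type family for the new sets yields one for the old sets
  by keeping the centres of the clouds that meet its first set. Both constructions preserve
  the bounds \<open>|Y\<^sub>i| \<ge> c |X\<^sub>i|\<close>, so the same constants \<open>c\<close> are admissible on both sides.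
\<close>

definition orientation_matrix :: "('d option \<Rightarrow> real^'d) \<Rightarrow> real^'d^'d" where
  "orientation_matrix y = (\<chi> i j. y (Some i) $ j - y None $ j)"

lemma orientation_eq_sgn_det: "orientation y = sgn (det (orientation_matrix y))"
  by (simp add: orientation_def orientation_matrix_def)

lemma row_orientation_matrix: "row i (orientation_matrix y) = y (Some i) - y None"
  by (simp add: row_def orientation_matrix_def vec_eq_iff)

lemma sum_UNIV_option:
  "(\<Sum>k\<in>UNIV. f k) = f None + (\<Sum>i\<in>UNIV. f (Some i))" for f :: "'a::finite option \<Rightarrow> 'b::comm_monoid_add"
  by (subst UNIV_option_conv) (simp add: sum.reindex)

lemma det_orientation_matrix_nonzero:
  fixes z :: "'d option \<Rightarrow> real^'d"
  assumes "inj z" and "\<not> affine_dependent (range z)"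
  shows "det (orientation_matrix z) \<noteq> 0"
proof -
  have "c = (\<lambda>_. 0)" if rows_dep: "(\<Sum>i\<in>UNIV. c i *s row i (orientation_matrix z)) = 0" for c
  proof (rule ccontr)
    assume "c \<noteq> (\<lambda>_. 0)"
    then obtain i where "c i \<noteq> 0" by auto
    \<comment> \<open>the coefficients \<open>c\<close> extended by \<open>-\<Sum> c\<close> at the apex \<open>z None\<close> form an affine dependence\<close>
    define u where "u k = (case k of None \<Rightarrow> - sum c UNIV | Some i \<Rightarrow> c i)" for k
    define U where "U = u \<circ> inv z"
    have "sum U (range z) = sum u UNIV"
      using assms(1) by (simp add: sum.reindex U_def)
    also have "\<dots> = 0" by (simp add: sum_UNIV_option u_def)
    finally have sum_U: "sum U (range z) = 0" .
    have "(\<Sum>v\<in>range z. U v *\<^sub>R v) = (\<Sum>k\<in>UNIV. u k *\<^sub>R z k)"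
      using assms(1) by (simp add: sum.reindex U_def)
    also have "\<dots> = (\<Sum>i\<in>UNIV. c i *\<^sub>R (z (Some i) - z None))"
      by (simp add: sum_UNIV_option u_def scaleR_diff_right sum_subtractf scaleR_sum_left)
    also have "\<dots> = 0"
      using rows_dep by (simp add: row_orientation_matrix scalar_mult_eq_scaleR)
    finally have "(\<Sum>v\<in>range z. U v *\<^sub>R v) = 0" .
    moreover have "U (z (Some i)) \<noteq> 0"
      using assms(1) \<open>c i \<noteq> 0\<close> by (simp add: U_def u_def)
    ultimately have "affine_dependent (range z)"
      unfolding affine_dependent_explicit using sum_U by (intro exI[of _ "range z"] exI[of _ U]) auto
    with assms(2) show False ..
  qed
  then have "invertible (orientation_matrix z)"
    by (auto simp: invertible_right_inverse matrix_right_invertible_independent_rows)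
  then show ?thesis by (simp add: invertible_det_nz)
qed

lemma continuous_det_orientation_matrix_upd:
  fixes z :: "'d option \<Rightarrow> real^'d"
  shows "continuous (at p0) (\<lambda>p. det (orientation_matrix (z(k := p))))"
proof -
  have entries: "continuous (at p0) (\<lambda>p. (z(k := p)) l $ j)" for l j
    by (cases "l = k") (simp_all add: continuous_intros)
  show ?thesis
    unfolding det_def orientation_matrix_def
    by (simp del: fun_upd_apply) (intro continuous_intros entries)
qed

lemma sgn_eq_if_dist_less_abs: "\<bar>a - b\<bar> < \<bar>b\<bar> \<Longrightarrow> sgn a = sgn (b::real)"
  by (auto simp: sgn_real_def split: if_splits)

lemma orientation_locally_constant:
  fixes z :: "'d option \<Rightarrow> real^'d"
  assumes "inj z" and "\<not> affine_dependent (range z)"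
  shows "\<exists>d>0. \<forall>p. dist p (z k) < d \<longrightarrow> orientation (z(k := p)) = orientation z"
proof -
  let ?D = "\<lambda>p. det (orientation_matrix (z(k := p)))"
  have "\<bar>?D (z k)\<bar> > 0"
    using det_orientation_matrix_nonzero[OF assms] by simp
  then obtain d where "d > 0" and d: "\<forall>p. dist p (z k) < d \<longrightarrow> dist (?D p) (?D (z k)) < \<bar>?D (z k)\<bar>"
    using continuous_det_orientation_matrix_upd[of "z k" z k]
    unfolding continuous_at_eps_delta by blast
  have "orientation (z(k := p)) = orientation z" if "dist p (z k) < d" for p
    using d that sgn_eq_if_dist_less_abs by (simp add: orientation_eq_sgn_det dist_real_def)
  with \<open>d > 0\<close> show ?thesis by blast
qed

lemma points_gen_pos_affine_independent_range:
  fixes z :: "'d option \<Rightarrow> real^'d"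
  assumes "points_gen_pos U" and "range z \<subseteq> U"
  shows "\<not> affine_dependent (range z)"
proof -
  have "card (range z) \<le> CARD('d option)" by (rule card_image_le) simp
  also have "\<dots> = CARD('d) + 1" by (simp add: UNIV_option_conv card_image)
  finally show ?thesis
    using assms unfolding points_gen_pos_def by blast
qed

definition orientation_stable :: "(real^'d) set \<Rightarrow> real \<Rightarrow> bool" where
  "orientation_stable U \<delta> \<longleftrightarrow>
     (\<forall>z :: 'd option \<Rightarrow> real^'d. \<forall>k p. inj z \<and> range z \<subseteq> U \<and> dist p (z k) < \<delta>
        \<longrightarrow> orientation (z(k := p)) = orientation z)"

lemma eventually_orientation_stable:
  fixes U :: "(real^'d) set"
  assumes "finite U" and "points_gen_pos U"
  shows "eventually (orientation_stable U) (at_right 0)"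
proof -
  define T where "T = {z :: 'd option \<Rightarrow> real^'d. inj z \<and> range z \<subseteq> U}"
  have "T \<subseteq> PiE UNIV (\<lambda>_. U)" by (auto simp: T_def PiE_def extensional_def)
  then have "finite T"
    by (rule finite_subset[OF _ finite_PiE]) (simp_all add: assms(1))
  then have "finite (T \<times> (UNIV :: 'd option set))" by simp
  moreover have "eventually (\<lambda>\<delta>. \<forall>p. dist p (z k) < \<delta> \<longrightarrow> orientation (z(k := p)) = orientation z)
      (at_right 0)" if "(z, k) \<in> T \<times> UNIV" for z k
  proof -
    have "inj z" and "range z \<subseteq> U"
      using that by (auto simp: T_def)
    have "\<not> affine_dependent (range z)"
      using assms(2) \<open>range z \<subseteq> U\<close> by (rule points_gen_pos_affine_independent_range)
    with \<open>inj z\<close> obtain d where "d > 0"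
      and d: "\<forall>p. dist p (z k) < d \<longrightarrow> orientation (z(k := p)) = orientation z"
      using orientation_locally_constant by blast
    show ?thesis
      using eventually_at_right_real[OF \<open>d > 0\<close>] by eventually_elim (use d in auto)
  qed
  ultimately have "eventually (\<lambda>\<delta>. \<forall>(z, k) \<in> T \<times> UNIV.
      \<forall>p. dist p (z k) < \<delta> \<longrightarrow> orientation (z(k := p)) = orientation z) (at_right 0)"
    by (intro eventually_ball_finite) auto
  then show ?thesis
    by eventually_elim (auto simp: orientation_stable_def T_def)
qed

lemma eventually_separated:
  fixes A :: "'a::metric_space set"
  assumes "finite A"
  shows "eventually (\<lambda>\<delta>. \<forall>x\<in>A. \<forall>x'\<in>A. x \<noteq> x' \<longrightarrow> 2 * \<delta> < dist x x') (at_right 0)"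
proof -
  have "eventually (\<lambda>\<delta>. x \<noteq> x' \<longrightarrow> 2 * \<delta> < dist x x') (at_right 0)" for x x' :: 'a
  proof (cases "x = x'")
    case False
    then have "dist x x' / 2 > 0" by simp
    from eventually_at_right_real[OF this] show ?thesis by eventually_elim auto
  qed simp
  then show ?thesis
    using assms by (intro eventually_ball_finite ballI) auto
qed

lemma disjoint_family_on_clouds:
  assumes "\<forall>x\<in>A. \<forall>y\<in>C x. dist y x < \<delta>"
    and "\<forall>x\<in>A. \<forall>x'\<in>A. x \<noteq> x' \<longrightarrow> 2 * \<delta> < dist x x'"
  shows "disjoint_family_on C A"
  unfolding disjoint_family_on_def
proof (intro ballI impI equals0I)
  fix x x' p assume "x \<in> A" "x' \<in> A" "x \<noteq> x'" "p \<in> C x \<inter> C x'"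
  then have "dist x p < \<delta>" "dist x' p < \<delta>"
    using assms(1) by (auto simp: dist_commute)
  with dist_triangle2[of x x' p] have "dist x x' < 2 * \<delta>" by linarith
  with assms(2) \<open>x \<in> A\<close> \<open>x' \<in> A\<close> \<open>x \<noteq> x'\<close> show False by fastforce
qed

lemma orientation_eq_if_moved_in_one_class:
  fixes y z :: "'d option \<Rightarrow> real^'d" and g :: "'d option \<Rightarrow> 'i"
  assumes "orientation_stable U \<delta>" and "inj g" and "inj z" and "range z \<subseteq> U"
    and "\<forall>k. g k \<noteq> i \<longrightarrow> y k = z k" and "\<forall>k. g k = i \<longrightarrow> dist (y k) (z k) < \<delta>"
  shows "orientation y = orientation z"
proof (cases "\<exists>k. g k = i")
  case True
  then obtain k where k: "g k = i" by blast
  have "y = z(k := y k)"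
    using assms(2,5) k by (auto simp: inj_eq)
  then show ?thesis
    using assms k unfolding orientation_stable_def by metis
next
  case False
  with assms(5) have "y = z" by auto
  then show ?thesis by simp
qed

lemma transversal_inj_subset:
  fixes X Y :: "nat \<Rightarrow> (real^'d) set" and z :: "'k \<Rightarrow> real^'d"
  assumes "family_gen_pos X m" and "\<forall>i<m. Y i \<subseteq> X i"
    and "inj g" and "range g \<subseteq> {..<m}" and "\<forall>k. z k \<in> Y (g k)"
  shows "inj z \<and> range z \<subseteq> (\<Union>i<m. X i)"
proof -
  have z: "z k \<in> X (g k)" "g k < m" for k
    using assms(2,4,5) by blast+
  have disjoint: "X i \<inter> X j = {}" if "i < m" "j < m" "i \<noteq> j" for i j
    using assms(1) that by (simp add: family_gen_pos_def)
  have "inj z"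
  proof (rule injI)
    fix k k' assume "z k = z k'"
    have "g k = g k'"
    proof (rule ccontr)
      assume "g k \<noteq> g k'"
      then have "X (g k) \<inter> X (g k') = {}"
        using z by (intro disjoint)
      with z \<open>z k = z k'\<close> show False by (metis disjoint_iff)
    qed
    with assms(3) show "k = k'" by (rule injD)
  qed
  moreover have "range z \<subseteq> (\<Union>i<m. X i)"
    using z by blast
  ultimately show ?thesis ..
qed

lemma same_type_if_transversals_correspond:
  fixes Y Y' :: "nat \<Rightarrow> (real^'d) set"
  assumes "same_type Y m"
    and "\<And>g y. inj g \<Longrightarrow> range g \<subseteq> {..<m} \<Longrightarrow> \<forall>k. y k \<in> Y' (g k) \<Longrightarrow>
           \<exists>z. (\<forall>k. z k \<in> Y (g k)) \<and> orientation y = orientation z"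
  shows "same_type Y' m"
  unfolding same_type_def
proof (intro allI impI, elim conjE)
  fix g :: "'d option \<Rightarrow> nat" and y y' :: "'d option \<Rightarrow> real^'d"
  assume g: "inj g" "range g \<subseteq> {..<m}" and y: "\<forall>k. y k \<in> Y' (g k)" "\<forall>k. y' k \<in> Y' (g k)"
  obtain z where z: "\<forall>k. z k \<in> Y (g k)" "orientation y = orientation z"
    using assms(2)[OF g y(1)] by blast
  obtain z' where z': "\<forall>k. z' k \<in> Y (g k)" "orientation y' = orientation z'"
    using assms(2)[OF g y(2)] by blast
  have "orientation z = orientation z'"
    using assms(1) g z(1) z'(1) unfolding same_type_def by blast
  with z(2) z'(2) show "orientation y = orientation y'" by simp
qed

lemma same_type_replace_class_by_close_set:
  fixes X Y Y' :: "nat \<Rightarrow> (real^'d) set"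
  assumes fam: "family_gen_pos X m" and YX: "\<forall>j<m. Y j \<subseteq> X j"
    and stable: "orientation_stable (\<Union>j<m. X j) \<delta>"
    and same: "\<forall>j. j \<noteq> i \<longrightarrow> Y' j = Y j"
    and close_Y: "\<forall>x\<in>Y i. \<exists>p\<in>Y' i. dist p x < \<delta>"
    and close_Y': "\<forall>p\<in>Y' i. \<exists>x\<in>Y i. dist p x < \<delta>"
  shows "same_type Y' m \<longleftrightarrow> same_type Y m"
proof
  assume "same_type Y' m"
  then show "same_type Y m"
  proof (rule same_type_if_transversals_correspond)
    fix g and z :: "'d option \<Rightarrow> real^'d"
    assume g: "inj g" "range g \<subseteq> {..<m}" and z: "\<forall>k. z k \<in> Y (g k)"
    obtain f where f: "\<forall>x\<in>Y i. f x \<in> Y' i \<and> dist (f x) x < \<delta>"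
      using bchoice[of "Y i" "\<lambda>x p. p \<in> Y' i \<and> dist p x < \<delta>"] close_Y by blast
    define y where "y k = (if g k = i then f (z k) else z k)" for k
    have "\<forall>k. y k \<in> Y' (g k)"
      using f z same by (auto simp: y_def)
    moreover have "orientation y = orientation z"
    proof (rule orientation_eq_if_moved_in_one_class[OF stable \<open>inj g\<close>])
      show "inj z" "range z \<subseteq> (\<Union>j<m. X j)"
        using transversal_inj_subset[OF fam YX g z] by auto
      show "\<forall>k. g k \<noteq> i \<longrightarrow> y k = z k"
        by (simp add: y_def)
      show "\<forall>k. g k = i \<longrightarrow> dist (y k) (z k) < \<delta>"
        using f z by (simp add: y_def) metis
    qed
    ultimately show "\<exists>y. (\<forall>k. y k \<in> Y' (g k)) \<and> orientation z = orientation y"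
      by auto
  qed
next
  assume "same_type Y m"
  then show "same_type Y' m"
  proof (rule same_type_if_transversals_correspond)
    fix g and y :: "'d option \<Rightarrow> real^'d"
    assume g: "inj g" "range g \<subseteq> {..<m}" and y: "\<forall>k. y k \<in> Y' (g k)"
    obtain h where h: "\<forall>p\<in>Y' i. h p \<in> Y i \<and> dist p (h p) < \<delta>"
      using bchoice[of "Y' i" "\<lambda>p x. x \<in> Y i \<and> dist p x < \<delta>"] close_Y' by blast
    define z where "z k = (if g k = i then h (y k) else y k)" for k
    have z: "\<forall>k. z k \<in> Y (g k)"
      using h y same by (auto simp: z_def)
    moreover have "orientation y = orientation z"
    proof (rule orientation_eq_if_moved_in_one_class[OF stable \<open>inj g\<close>])
      show "inj z" "range z \<subseteq> (\<Union>j<m. X j)"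
        using transversal_inj_subset[OF fam YX g z] by auto
      show "\<forall>k. g k \<noteq> i \<longrightarrow> y k = z k"
        by (simp add: z_def)
      show "\<forall>k. g k = i \<longrightarrow> dist (y k) (z k) < \<delta>"
        using h y by (simp add: z_def) metis
    qed
    ultimately show "\<exists>z. (\<forall>k. z k \<in> Y (g k)) \<and> orientation y = orientation z"
      by auto
  qed
qed

definition same_type_feasible :: "(nat \<Rightarrow> (real^'d) set) \<Rightarrow> nat \<Rightarrow> real \<Rightarrow> bool" where
  "same_type_feasible X m c \<longleftrightarrow>
     (\<exists>Y. (\<forall>i<m. Y i \<subseteq> X i \<and> real (card (Y i)) \<ge> c * real (card (X i))) \<and> same_type Y m)"

lemma same_type_feasibleI:
  assumes "same_type Y m" and "\<And>i. i < m \<Longrightarrow> Y i \<subseteq> X i"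
    and "\<And>i. i < m \<Longrightarrow> c * real (card (X i)) \<le> real (card (Y i))"
  shows "same_type_feasible X m c"
  using assms unfolding same_type_feasible_def by blast

lemma same_type_const_eq_Greatest: "same_type_const X m = (GREATEST c. same_type_feasible X m c)"
  by (simp add: same_type_const_def same_type_feasible_def)

locale cloud_replacement =
  fixes X :: "nat \<Rightarrow> (real^'d) set" and m n :: nat and \<delta> :: real
    and C :: "real^'d \<Rightarrow> (real^'d) set"
  assumes family: "family_gen_pos X m" and m_pos: "0 < m" and finite_X0: "finite (X 0)"
    and n_pos: "0 < n"
    and stable: "orientation_stable (\<Union>i<m. X i) \<delta>"
    and clouds: "\<forall>x\<in>X 0. finite (C x) \<and> card (C x) = n \<and> (\<forall>y\<in>C x. dist y x < \<delta>)"
    and disjoint: "disjoint_family_on C (X 0)"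
begin

lemma clouds_nonempty: "x \<in> X 0 \<Longrightarrow> C x \<noteq> {}"
  using clouds n_pos by force

lemma card_UN_clouds:
  assumes "B \<subseteq> X 0"
  shows "card (\<Union>x\<in>B. C x) = n * card B"
proof -
  have "card (\<Union>x\<in>B. C x) = (\<Sum>x\<in>B. card (C x))"
    using assms clouds disjoint finite_X0
    by (intro card_UN_disjoint') (auto intro: disjoint_family_on_mono finite_subset)
  also have "\<dots> = (\<Sum>x\<in>B. n)"
    using assms clouds by (intro sum.cong) auto
  also have "\<dots> = n * card B" by simp
  finally show ?thesis .
qed

lemma same_type_blow_up:
  assumes YX: "\<forall>i<m. Y i \<subseteq> X i" and "same_type Y m"
  shows "same_type (Y(0 := \<Union>x\<in>Y 0. C x)) m"
proof -
  have Y0: "Y 0 \<subseteq> X 0"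
    using YX m_pos by blast
  have "\<forall>x\<in>Y 0. \<exists>p\<in>C x. dist p x < \<delta>"
    using Y0 clouds clouds_nonempty by fastforce
  then have "\<forall>x\<in>Y 0. \<exists>p\<in>\<Union>x\<in>Y 0. C x. dist p x < \<delta>"
    by blast
  moreover have "\<forall>p\<in>\<Union>x\<in>Y 0. C x. \<exists>x\<in>Y 0. dist p x < \<delta>"
    using Y0 clouds by blast
  ultimately show ?thesis
    using same_type_replace_class_by_close_set[OF family YX stable, of 0 "Y(0 := \<Union>x\<in>Y 0. C x)"]
      \<open>same_type Y m\<close> by simp
qed

lemma same_type_shrink:
  assumes YX: "\<forall>i<m. i \<noteq> 0 \<longrightarrow> Y i \<subseteq> X i" and Y0: "Y 0 \<subseteq> (\<Union>x\<in>X 0. C x)"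
    and "same_type Y m"
  shows "same_type (Y(0 := {x \<in> X 0. C x \<inter> Y 0 \<noteq> {}})) m"
proof -
  let ?Y = "Y(0 := {x \<in> X 0. C x \<inter> Y 0 \<noteq> {}})"
  have "\<forall>i<m. ?Y i \<subseteq> X i"
    using YX by auto
  moreover have "\<forall>x\<in>?Y 0. \<exists>p\<in>Y 0. dist p x < \<delta>"
    using clouds by fastforce
  moreover have "\<forall>p\<in>Y 0. \<exists>x\<in>?Y 0. dist p x < \<delta>"
    using Y0 clouds by fastforce
  ultimately show ?thesis
    using same_type_replace_class_by_close_set[OF family _ stable, of ?Y 0 Y] \<open>same_type Y m\<close>
    by simp
qed

lemma card_le_mult_card_centres:
  assumes "P \<subseteq> (\<Union>x\<in>X 0. C x)"
  shows "card P \<le> n * card {x \<in> X 0. C x \<inter> P \<noteq> {}}"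
proof -
  let ?B = "{x \<in> X 0. C x \<inter> P \<noteq> {}}"
  have "P \<subseteq> (\<Union>x\<in>?B. C x)"
    using assms by blast
  moreover have "finite (\<Union>x\<in>?B. C x)"
    using clouds finite_X0 by auto
  ultimately have "card P \<le> card (\<Union>x\<in>?B. C x)"
    by (rule card_mono[rotated])
  also have "\<dots> = n * card ?B"
    by (rule card_UN_clouds) blast
  finally show ?thesis .
qed

lemma same_type_feasible_blow_up:
  assumes "same_type_feasible X m c"
  shows "same_type_feasible (X(0 := \<Union>x\<in>X 0. C x)) m c"
proof -
  obtain Y where Y: "\<forall>i<m. Y i \<subseteq> X i \<and> real (card (Y i)) \<ge> c * real (card (X i))"
    and "same_type Y m"
    using assms unfolding same_type_feasible_def by blast
  from m_pos Y have Y0: "Y 0 \<subseteq> X 0" and c0: "c * real (card (X 0)) \<le> real (card (Y 0))"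
    by auto
  have bound0: "c * real (card (\<Union>x\<in>X 0. C x)) \<le> real (card (\<Union>x\<in>Y 0. C x))"
  proof -
    have "c * real (card (\<Union>x\<in>X 0. C x)) = real n * (c * real (card (X 0)))"
      by (simp add: card_UN_clouds)
    also have "\<dots> \<le> real n * real (card (Y 0))"
      using c0 by (intro mult_left_mono) auto
    also have "\<dots> = real (card (\<Union>x\<in>Y 0. C x))"
      using Y0 by (simp add: card_UN_clouds)
    finally show ?thesis .
  qed
  show ?thesis
  proof (rule same_type_feasibleI)
    show "same_type (Y(0 := \<Union>x\<in>Y 0. C x)) m"
      using Y \<open>same_type Y m\<close> by (intro same_type_blow_up) auto
    fix i assume "i < m"
    then show "(Y(0 := \<Union>x\<in>Y 0. C x)) i \<subseteq> (X(0 := \<Union>x\<in>X 0. C x)) i"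
      using Y Y0 by (cases "i = 0") auto
    show "c * real (card ((X(0 := \<Union>x\<in>X 0. C x)) i)) \<le> real (card ((Y(0 := \<Union>x\<in>Y 0. C x)) i))"
    proof (cases "i = 0")
      case False
      with Y \<open>i < m\<close> show ?thesis by simp
    qed (use bound0 in simp)
  qed
qed

lemma same_type_feasible_shrink:
  assumes "same_type_feasible (X(0 := \<Union>x\<in>X 0. C x)) m c"
  shows "same_type_feasible X m c"
proof -
  obtain Y where Y: "\<forall>i<m. Y i \<subseteq> (X(0 := \<Union>x\<in>X 0. C x)) i
      \<and> real (card (Y i)) \<ge> c * real (card ((X(0 := \<Union>x\<in>X 0. C x)) i))"
    and "same_type Y m"
    using assms unfolding same_type_feasible_def by blast
  have Y_other: "Y i \<subseteq> X i \<and> c * real (card (X i)) \<le> real (card (Y i))" if "i < m" "i \<noteq> 0" for i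
    using Y that by fastforce
  from m_pos Y have "Y 0 \<subseteq> (X(0 := \<Union>x\<in>X 0. C x)) 0
      \<and> c * real (card ((X(0 := \<Union>x\<in>X 0. C x)) 0)) \<le> real (card (Y 0))" by blast
  then have Y0: "Y 0 \<subseteq> (\<Union>x\<in>X 0. C x)"
    and c0: "c * real (card (\<Union>x\<in>X 0. C x)) \<le> real (card (Y 0))" by simp_all
  let ?B = "{x \<in> X 0. C x \<inter> Y 0 \<noteq> {}}"
  have "real n * (c * real (card (X 0))) \<le> real n * real (card ?B)"
  proof -
    have "real n * (c * real (card (X 0))) = c * real (card (\<Union>x\<in>X 0. C x))"
      by (simp add: card_UN_clouds)
    also have "\<dots> \<le> real (card (Y 0))" by (rule c0)
    also have "\<dots> \<le> real n * real (card ?B)"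
      using card_le_mult_card_centres[OF Y0] by (simp flip: of_nat_mult)
    finally show ?thesis .
  qed
  with n_pos have bound0: "c * real (card (X 0)) \<le> real (card ?B)"
    by simp
  show ?thesis
  proof (rule same_type_feasibleI)
    show "same_type (Y(0 := ?B)) m"
      using Y_other Y0 \<open>same_type Y m\<close> by (intro same_type_shrink) auto
    fix i assume "i < m"
    then show "(Y(0 := ?B)) i \<subseteq> X i"
      using Y_other by (cases "i = 0") auto
    show "c * real (card (X i)) \<le> real (card ((Y(0 := ?B)) i))"
      using Y_other \<open>i < m\<close> bound0 by (cases "i = 0") auto
  qed
qed

lemma same_type_const_replace_by_clouds:
  "same_type_const X m = same_type_const (X(0 := \<Union>x\<in>X 0. C x)) m"
proof -
  have "same_type_feasible X m = same_type_feasible (X(0 := \<Union>x\<in>X 0. C x)) m"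
    using same_type_feasible_blow_up same_type_feasible_shrink by blast
  then show ?thesis by (simp add: same_type_const_eq_Greatest)
qed

end

theorem lemma3:
  fixes X :: "nat \<Rightarrow> (real^'d) set" and m n :: nat
  assumes "m \<ge> 1"
    and "\<forall>i<m. finite (X i) \<and> X i \<noteq> {}"
    and "family_gen_pos X m"
    and "n \<ge> 1"
  shows "\<exists>\<delta>>0. \<forall>C :: real^'d \<Rightarrow> (real^'d) set.
           (\<forall>x\<in>X 0. finite (C x) \<and> card (C x) = n \<and> (\<forall>y\<in>C x. dist y x < \<delta>))
           \<and> family_gen_pos (X(0 := (\<Union>x\<in>X 0. C x))) m
           \<longrightarrow> same_type_const X m = same_type_const (X(0 := (\<Union>x\<in>X 0. C x))) m"
proof -
  let ?U = "\<Union>i<m. X i"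
  have "finite ?U" and finite_X0: "finite (X 0)"
    using assms(1,2) by auto
  moreover have "points_gen_pos ?U"
    using assms(3) by (simp add: family_gen_pos_def)
  ultimately have "eventually (\<lambda>\<delta>. 0 < \<delta> \<and> orientation_stable ?U \<delta>
      \<and> (\<forall>x\<in>X 0. \<forall>x'\<in>X 0. x \<noteq> x' \<longrightarrow> 2 * \<delta> < dist x x')) (at_right 0)"
    by (intro eventually_conj eventually_at_right_less eventually_orientation_stable eventually_separated)
  from eventually_happens'[OF trivial_limit_at_right_real this]
  obtain \<delta> :: real where "0 < \<delta>" and stable: "orientation_stable ?U \<delta>"
    and separated: "\<forall>x\<in>X 0. \<forall>x'\<in>X 0. x \<noteq> x' \<longrightarrow> 2 * \<delta> < dist x x'"
    by blast
  show ?thesis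
  proof (intro exI[of _ \<delta>] conjI allI impI \<open>0 < \<delta>\<close>, elim conjE)
    fix C :: "real^'d \<Rightarrow> (real^'d) set"
    assume clouds: "\<forall>x\<in>X 0. finite (C x) \<and> card (C x) = n \<and> (\<forall>y\<in>C x. dist y x < \<delta>)"
    then have "disjoint_family_on C (X 0)"
      using separated by (intro disjoint_family_on_clouds) auto
    then interpret cloud_replacement X m n \<delta> C
      using assms finite_X0 stable clouds by unfold_locales auto
    show "same_type_const X m = same_type_const (X(0 := \<Union>x\<in>X 0. C x)) m"
      by (rule same_type_const_replace_by_clouds)
  qed
qed

end
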